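(* Under the assumptions of Lemma 6.4 stated below, suppose in addition that $\sup_n\|I_n\mathbf K\|_{L^{\infty,1}(\Omega^2)}<+\infty$. Then $\sup_{t\in[0,T],n\in\mathbb N}\|\tilde u_n(\cdot,t)-\bar u_n(\cdot,t)\|_{L^2(\Omega)}\le C\tau$, where $C>0$ does not depend on $(n,N,T)$. Assumptions of Lemma 6.4: $p\in]1,2]$; for each $n$, $\mathbf u^k$ is given by the explicit scheme $\frac{\mathbf u^k-\mathbf u^{k-1}}{\tau_{k-1}}=-\Delta_p^{\mathbf K}\mathbf u^{k-1}+\mathbf f$, $\mathbf u^0=\mathbf g$, with step sizes $\tau_k\le2C_n\|\Delta_p^{I_n\mathbf K}u_n^k-f_n\|_{L^2}^{\frac{2-p}{p-1}}$, $u_n^k=I_n\mathbf u^k$, $f_n=I_n\mathbf f$, $C_n=2^{\frac{p-2}{2(p-1)}}(C_2^{1/2}\|I_n\mathbf K\|_{L^{\infty,1}(\Omega^2)})^{\frac1{1-p}}(1-1/p)$, $C_2=\max(2^{2-p},(p-1)2^{2-p},1)$; $I_n\mathbf g\in L^2(\Omega)$; $I_n\mathbf K$ nonnegative, measurable, symmetric with $\sup_x\int I_n\mathbf K(x,y)dy<\infty$; for each $n$ there is $\mathbf u^\star$ with $\Delta_p^{\mathbf K}\mathbf u^\star=\mathbf f$ and $\sup_n\|I_n\mathbf g-I_n\mathbf u^\star\|_{L^2}<\infty$.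
   Context: $d\ge1$, $\Omega=[0,1]^d$, hypercubic cells $\Omega^n_{\mathbf i}$ of measures $h_{\mathbf i}$, $I_n$ the piecewise-constant injector. $\Psi(s)=|s|^{p-2}s$; $(\Delta_p^{\mathbf K}\mathbf u)_{\mathbf i}=-\sum_{\mathbf j}h_{\mathbf j}\mathbf K_{\mathbf i\mathbf j}\Psi(\mathbf u_{\mathbf j}-\mathbf u_{\mathbf i})$ and $\Delta_p^Ku(x)=-\int_\Omega K(x,y)\Psi(u(y)-u(x))dy$. Time partition $0=t_0<\dots<t_N=T$, $\tau_{k-1}=t_k-t_{k-1}$, $\tau=\max_k\tau_{k-1}$. $\tilde u_n(x,t)=\frac{t_k-t}{\tau_{k-1}}u_n^{k-1}(x)+\frac{t-t_{k-1}}{\tau_{k-1}}u_n^k(x)$ and $\bar u_n(x,t)=u_n^{k-1}(x)$ for $t\in]t_{k-1},t_k]$. $\|F\|_{L^{\infty,1}(\Omega^2)}=\sup_x\int|F(x,y)|dy$. *)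

theory Defs
  imports "HOL-Analysis.Analysis"
begin

definition Omega :: "(real^'d::finite) set" where
  "Omega = {x. \<forall>l. 0 \<le> x$l \<and> x$l \<le> 1}"

definition is_cell_partition :: "'i set \<Rightarrow> ('i \<Rightarrow> (real^'d::finite) set) \<Rightarrow> bool" where
  "is_cell_partition J c \<longleftrightarrow> finite J \<and> J \<noteq> {} \<and> (\<Union>i\<in>J. c i) = Omega \<and>
     (\<forall>i\<in>J. \<forall>j\<in>J. i \<noteq> j \<longrightarrow> c i \<inter> c j = {}) \<and>
     (\<forall>i\<in>J. c i \<in> sets lebesgue \<and>
        (\<exists>a b r. r > 0 \<and> (\<forall>l. b$l = a$l + r) \<and> box a b \<subseteq> c i \<and> c i \<subseteq> cbox a b))"

definition cellmeas :: "('i \<Rightarrow> (real^'d::finite) set) \<Rightarrow> 'i \<Rightarrow> real" where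
  "cellmeas c i = measure lebesgue (c i)"

definition inj :: "'i set \<Rightarrow> ('i \<Rightarrow> (real^'d::finite) set) \<Rightarrow> ('i \<Rightarrow> real) \<Rightarrow> real^'d \<Rightarrow> real" where
  "inj J c v x = (\<Sum>i\<in>J. v i * indicator (c i) x)"

definition inj2 :: "'i set \<Rightarrow> ('i \<Rightarrow> (real^'d::finite) set) \<Rightarrow> ('i \<Rightarrow> 'i \<Rightarrow> real)
     \<Rightarrow> real^'d \<Rightarrow> real^'d \<Rightarrow> real" where
  "inj2 J c K x y = (\<Sum>i\<in>J. \<Sum>j\<in>J. K i j * indicator (c i) x * indicator (c j) y)"

definition L2norm :: "(real^'d::finite \<Rightarrow> real) \<Rightarrow> real" where
  "L2norm F = sqrt (\<integral>x. (F x)^2 \<partial>(lebesgue_on Omega))"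

definition Linf1norm :: "(real^'d::finite \<Rightarrow> real^'d \<Rightarrow> real) \<Rightarrow> real" where
  "Linf1norm F = (SUP x\<in>Omega. \<integral>y. \<bar>F x y\<bar> \<partial>(lebesgue_on Omega))"

definition Psi :: "real \<Rightarrow> real \<Rightarrow> real" where
  "Psi p s = \<bar>s\<bar> powr (p - 2) * s"

definition dplap :: "real \<Rightarrow> 'i set \<Rightarrow> ('i \<Rightarrow> (real^'d::finite) set) \<Rightarrow> ('i \<Rightarrow> 'i \<Rightarrow> real)
     \<Rightarrow> ('i \<Rightarrow> real) \<Rightarrow> 'i \<Rightarrow> real" where
  "dplap p J c K u i = - (\<Sum>j\<in>J. cellmeas c j * K i j * Psi p (u j - u i))"

definition cplap :: "real \<Rightarrow> (real^'d::finite \<Rightarrow> real^'d \<Rightarrow> real) \<Rightarrow> (real^'d \<Rightarrow> real)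
     \<Rightarrow> real^'d \<Rightarrow> real" where
  "cplap p K u x = - (\<integral>y. K x y * Psi p (u y - u x) \<partial>(lebesgue_on Omega))"

text \<open>Power of a nonnegative base with the convention x^0 = 1.\<close>
definition pw :: "real \<Rightarrow> real \<Rightarrow> real" where
  "pw x e = (if e = 0 then 1 else x powr e)"

definition C2 :: "real \<Rightarrow> real" where
  "C2 p = max (max (2 powr (2 - p)) ((p - 1) * 2 powr (2 - p))) 1"

definition Cn :: "real \<Rightarrow> real \<Rightarrow> real" where
  "Cn p nK = 2 powr ((p - 2) / (2 * (p - 1))) * (sqrt (C2 p) * nK) powr (1 / (1 - p)) * (1 - 1 / p)"

definition time_partition :: "(nat \<Rightarrow> real) \<Rightarrow> nat \<Rightarrow> bool" where
  "time_partition t N \<longleftrightarrow> N \<ge> 1 \<and> t 0 = 0 \<and> (\<forall>k\<in>{1..N}. t (k - 1) < t k)"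

definition tau :: "(nat \<Rightarrow> real) \<Rightarrow> nat \<Rightarrow> real" where
  "tau t N = Max {t k - t (k - 1) | k. k \<in> {1..N}}"

definition explicit_scheme :: "real \<Rightarrow> 'i set \<Rightarrow> ('i \<Rightarrow> (real^'d::finite) set) \<Rightarrow> ('i \<Rightarrow> 'i \<Rightarrow> real)
     \<Rightarrow> ('i \<Rightarrow> real) \<Rightarrow> ('i \<Rightarrow> real) \<Rightarrow> (nat \<Rightarrow> real) \<Rightarrow> nat \<Rightarrow> (nat \<Rightarrow> 'i \<Rightarrow> real) \<Rightarrow> bool" where
  "explicit_scheme p J c K f g t N u \<longleftrightarrow>
     (\<forall>i\<in>J. u 0 i = g i) \<and>
     (\<forall>k\<in>{1..N}. \<forall>i\<in>J. (u k i - u (k - 1) i) / (t k - t (k - 1)) = - dplap p J c K (u (k - 1)) i + f i)"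

text \<open>Step size restriction tau_{k-1} <= 2 C_n ||Delta_p^{I_n K} u_n^{k-1} - f_n||^((2-p)/(p-1)),
  imposed when ||I_n K|| > 0 (otherwise C_n = +infinity and there is no restriction).\<close>
definition step_ok :: "real \<Rightarrow> 'i set \<Rightarrow> ('i \<Rightarrow> (real^'d::finite) set) \<Rightarrow> ('i \<Rightarrow> 'i \<Rightarrow> real)
     \<Rightarrow> ('i \<Rightarrow> real) \<Rightarrow> (nat \<Rightarrow> real) \<Rightarrow> nat \<Rightarrow> (nat \<Rightarrow> 'i \<Rightarrow> real) \<Rightarrow> bool" where
  "step_ok p J c K f t N u \<longleftrightarrow>
     (\<forall>k\<in>{1..N}. Linf1norm (inj2 J c K) > 0 \<longrightarrow>
        t k - t (k - 1) \<le> 2 * Cn p (Linf1norm (inj2 J c K)) *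
          pw (L2norm (\<lambda>x. cplap p (inj2 J c K) (inj J c (u (k - 1))) x - inj J c f x)) ((2 - p) / (p - 1)))"

definition utilde :: "'i set \<Rightarrow> ('i \<Rightarrow> (real^'d::finite) set) \<Rightarrow> (nat \<Rightarrow> real) \<Rightarrow> (nat \<Rightarrow> 'i \<Rightarrow> real)
     \<Rightarrow> nat \<Rightarrow> real \<Rightarrow> real^'d \<Rightarrow> real" where
  "utilde J c t u k s x = (t k - s) / (t k - t (k - 1)) * inj J c (u (k - 1)) x
                        + (s - t (k - 1)) / (t k - t (k - 1)) * inj J c (u k) x"

definition ubar :: "'i set \<Rightarrow> ('i \<Rightarrow> (real^'d::finite) set) \<Rightarrow> (nat \<Rightarrow> 'i \<Rightarrow> real)
     \<Rightarrow> nat \<Rightarrow> real^'d \<Rightarrow> real" where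
  "ubar J c u k x = inj J c (u (k - 1)) x"

end

theory Submission
  imports Defs
begin

(*
  Write e = u - u* and r = Delta_p^K u - f = Delta_p^K u - Delta_p^K u*.  The scheme reads
  e^k = e^(k-1) - tau_(k-1) r^(k-1), and on [t_(k-1), t_k] the difference utilde - ubar is
  -(t - t_(k-1)) r^(k-1), so it suffices to bound the residual r^(k-1) in L^2 uniformly.

  Let L bound the weighted row sums of K, i.e. ||I_n K||_(L^(inf,1)).  Since Psi is
  (p - 1)-Hoelder continuous, ||r||^2 <= 4 L^2 (1 + 4 ||e||^2).  The error ||e^k|| does not
  increase: ||e - tau r||^2 = ||e||^2 - 2 tau <r, e> + tau^2 ||r||^2, and summation by parts
  (K is symmetric), Jensen's inequality and the Hoelder estimate give the coercivity bound
  ||r||^p' <= (2 L)^(p' - 1) <r, e> with p' = p / (p - 1).  The step size restriction is exactly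
  what turns this into tau ||r||^2 <= 2 <r, e>.  Hence ||e^k|| <= ||g - u*||, which is bounded
  in n by hypothesis.
*)

section \<open>Elementary inequalities\<close>

lemma convex_on_powr_nonneg:
  fixes s :: real
  assumes "1 \<le> s"
  shows "convex_on {0..} (\<lambda>x. x powr s)"
proof (rule convex_onI)
  fix x y t :: real
  assume x: "x \<in> {0..}" and y: "y \<in> {0..}" and t: "0 < t" "t < 1"
  have shrink: "(a * z) powr s \<le> a * z powr s" if "0 \<le> a" "a \<le> 1" "0 \<le> z" for a z :: real
  proof -
    have "a powr s \<le> a"
      using that assms powr_mono'[of 1 s a] by (cases "a = 0") auto
    then show ?thesis
      using that by (simp add: powr_mult mult_right_mono)
  qed
  show "((1 - t) *\<^sub>R x + t *\<^sub>R y) powr s \<le> (1 - t) * x powr s + t * y powr s"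
  proof (cases "x = 0 \<or> y = 0")
    case True
    then show ?thesis
      using shrink[of t y] shrink[of "1 - t" x] x y t by auto
  next
    case False
    then show ?thesis
      using convex_onD[OF powr_convex[OF assms], of t x y] x y t by auto
  qed
qed (simp add: convex_real_interval)

lemma powr_weighted_sum_le:
  fixes w y :: "'a \<Rightarrow> real"
  assumes "finite S" "\<And>i. i \<in> S \<Longrightarrow> 0 \<le> w i" "\<And>i. i \<in> S \<Longrightarrow> 0 \<le> y i" "1 \<le> s"
  shows "(\<Sum>i\<in>S. w i * y i) powr s \<le> (\<Sum>i\<in>S. w i) powr (s - 1) * (\<Sum>i\<in>S. w i * y i powr s)"
proof -
  define W where "W = (\<Sum>i\<in>S. w i)"
  show ?thesis
  proof (cases "W = 0")
    case True
    then have "\<forall>i\<in>S. w i = 0"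
      using assms sum_nonneg_eq_0_iff unfolding W_def by blast
    then show ?thesis by simp
  next
    case False
    then have W: "0 < W" "S \<noteq> {}"
      using assms sum_nonneg[of S w] unfolding W_def by force+
    have "(\<Sum>i\<in>S. (w i / W) *\<^sub>R y i) powr s \<le> (\<Sum>i\<in>S. w i / W * y i powr s)"
      using assms W
      by (intro convex_on_sum[OF _ _ convex_on_powr_nonneg[OF \<open>1 \<le> s\<close>]])
         (auto simp: W_def sum_divide_distrib[symmetric])
    then have "((\<Sum>i\<in>S. w i * y i) / W) powr s \<le> (\<Sum>i\<in>S. w i * y i powr s) / W"
      by (simp add: sum_divide_distrib)
    moreover have "((\<Sum>i\<in>S. w i * y i) / W) powr s = (\<Sum>i\<in>S. w i * y i) powr s / (W powr (s - 1) * W)"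
      using W assms by (simp add: powr_divide sum_nonneg powr_diff)
    ultimately show ?thesis
      using W by (simp add: W_def divide_le_eq field_simps)
  qed
qed

lemma powr_add_le_add_powr:
  fixes x y r :: real
  assumes "0 \<le> x" "0 \<le> y" "0 < r" "r \<le> 1"
  shows "(x + y) powr r \<le> x powr r + y powr r"
proof (cases "x + y = 0")
  case False
  then have xy: "0 < x + y" using assms by auto
  have ge: "(x + y) powr r * (z / (x + y)) \<le> z powr r" if "0 \<le> z" "z \<le> x + y" for z
  proof -
    have "z / (x + y) \<le> (z / (x + y)) powr r"
      using that xy assms powr_mono'[of r 1 "z / (x + y)"] by (cases "z = 0") auto
    then have "(x + y) powr r * (z / (x + y)) \<le> (x + y) powr r * (z / (x + y)) powr r"
      by (rule mult_left_mono) simp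
    then show ?thesis
      using that xy by (simp add: powr_divide)
  qed
  have "(x + y) powr r = (x + y) powr r * (x / (x + y)) + (x + y) powr r * (y / (x + y))"
    using xy by (simp flip: distrib_left add_divide_distrib)
  then show ?thesis
    using ge[of x] ge[of y] assms by linarith
qed (use assms in auto)

lemma add_powr_le_powr_add:
  fixes x y r :: real
  assumes "0 \<le> x" "0 \<le> y" "0 < r" "r \<le> 1"
  shows "x powr r + y powr r \<le> 2 powr (1 - r) * (x + y) powr r"
proof -
  have "(\<Sum>b\<in>UNIV. 1 * (if b then x else y) powr r) powr (1 / r)
      \<le> (\<Sum>b\<in>(UNIV :: bool set). 1) powr (1 / r - 1)
        * (\<Sum>b\<in>UNIV. 1 * ((if b then x else y) powr r) powr (1 / r))"
    using assms by (intro powr_weighted_sum_le) auto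
  then have "(x powr r + y powr r) powr (1 / r) \<le> 2 powr (1 / r - 1) * (x + y)"
    using assms by (simp add: UNIV_bool powr_powr add.commute)
  then have "((x powr r + y powr r) powr (1 / r)) powr r \<le> (2 powr (1 / r - 1) * (x + y)) powr r"
    using assms by (intro powr_mono2) auto
  moreover have "(1 / r - 1) * r = 1 - r"
    using assms by (simp add: field_simps)
  ultimately show ?thesis
    using assms by (simp add: powr_powr powr_mult)
qed

section \<open>The function Psi\<close>

lemma Psi_nonneg_eq: "0 \<le> s \<Longrightarrow> Psi p s = s powr (p - 1)"
  using powr_add[of s "p - 2" 1] by (cases "s = 0") (auto simp: Psi_def)

lemma Psi_nonneg: "0 \<le> s \<Longrightarrow> 0 \<le> Psi p s"
  by (simp add: Psi_nonneg_eq)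

lemma Psi_minus: "Psi p (- s) = - Psi p s"
  by (simp add: Psi_def)

lemma Psi_mono:
  assumes "1 \<le> p" "a \<le> b"
  shows "Psi p a \<le> Psi p b"
proof -
  have mono_nonneg: "Psi p x \<le> Psi p y" if "0 \<le> x" "x \<le> y" for x y
    using that assms by (simp add: Psi_nonneg_eq powr_mono2)
  consider "0 \<le> a" | "b \<le> 0" | "a < 0" "0 < b" by linarith
  then show ?thesis
  proof cases
    case 2
    then show ?thesis using mono_nonneg[of "- b" "- a"] assms by (simp add: Psi_minus)
  next
    case 3
    then show ?thesis using Psi_nonneg[of "- a" p] Psi_nonneg[of b p] by (simp add: Psi_minus)
  qed (use mono_nonneg assms in auto)
qed

lemma Psi_diff_mult_nonneg: "1 \<le> p \<Longrightarrow> 0 \<le> (Psi p a - Psi p b) * (a - b)"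
  using Psi_mono[of p a b] Psi_mono[of p b a]
  by (cases "b \<le> a") (auto intro: mult_nonpos_nonpos)

text \<open>The factor 2 powr (2 - p) is only needed when a and b have opposite signs.\<close>
lemma Psi_diff_le:
  assumes p: "1 < p" "p \<le> 2"
  shows "\<bar>Psi p a - Psi p b\<bar> \<le> 2 powr (2 - p) * \<bar>a - b\<bar> powr (p - 1)"
proof -
  have one_le: "1 \<le> 2 powr (2 - p)"
    using p by (intro ge_one_powr_ge_zero) auto
  have same_sign: "Psi p y - Psi p x \<le> 2 powr (2 - p) * (y - x) powr (p - 1)"
    if "0 \<le> x" "x \<le> y" for x y
  proof -
    have "Psi p y - Psi p x \<le> (y - x) powr (p - 1)"
      using that p powr_add_le_add_powr[of x "y - x" "p - 1"] by (simp add: Psi_nonneg_eq)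
    also have "\<dots> \<le> 2 powr (2 - p) * (y - x) powr (p - 1)"
      using one_le by (simp add: mult_le_cancel_right1)
    finally show ?thesis .
  qed
  have ordered: "\<bar>Psi p a - Psi p b\<bar> \<le> 2 powr (2 - p) * \<bar>a - b\<bar> powr (p - 1)" if "b \<le> a" for a b
  proof -
    have mono: "Psi p b \<le> Psi p a" using Psi_mono[of p b a] p that by simp
    consider "0 \<le> b" | "a \<le> 0" | "b < 0" "0 < a" by linarith
    then show ?thesis
    proof cases
      case 1
      then show ?thesis using same_sign[of b a] that mono by simp
    next
      case 2
      then show ?thesis using same_sign[of "- a" "- b"] that mono by (simp add: Psi_minus)
    next
      case 3
      then have "Psi p a - Psi p b = a powr (p - 1) + (- b) powr (p - 1)"
        using Psi_nonneg_eq[of a p] Psi_nonneg_eq[of "- b" p] by (simp add: Psi_minus)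
      also have "\<dots> \<le> 2 powr (2 - p) * (a - b) powr (p - 1)"
        using 3 p add_powr_le_powr_add[of a "- b" "p - 1"] by simp
      finally show ?thesis using that mono by simp
    qed
  qed
  show ?thesis
    using ordered[of b a] ordered[of a b] by (cases "b \<le> a") (auto simp: abs_minus_commute)
qed

lemma Psi_diff_sq_le:
  assumes p: "1 < p" "p \<le> 2"
  shows "(Psi p a - Psi p b)\<^sup>2 \<le> 4 * (1 + (a - b)\<^sup>2)"
proof -
  define z where "z = \<bar>a - b\<bar> powr (p - 1)"
  have "2 powr (2 - p) \<le> 2 powr 1"
    using p by (intro powr_mono) auto
  then have "\<bar>Psi p a - Psi p b\<bar> \<le> 2 * z"
    using Psi_diff_le[OF p, of a b] mult_right_mono[of "2 powr (2 - p)" 2 z]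
    by (simp add: z_def)
  then have "(Psi p a - Psi p b)\<^sup>2 \<le> 4 * z\<^sup>2"
    using power_mono[of "\<bar>Psi p a - Psi p b\<bar>" "2 * z" 2] by (simp add: power_mult_distrib)
  also have "z\<^sup>2 = \<bar>a - b\<bar> powr (2 * (p - 1))"
    using powr_powr[of "\<bar>a - b\<bar>" "p - 1" 2] by (simp add: z_def mult.commute)
  also have "\<bar>a - b\<bar> powr (2 * (p - 1)) \<le> 1 + (a - b)\<^sup>2"
  proof (cases "\<bar>a - b\<bar> \<le> 1")
    case True
    then have "\<bar>a - b\<bar> powr (2 * (p - 1)) \<le> 1"
      using p by (intro powr_le1) auto
    then show ?thesis by (simp add: add_increasing2)
  next
    case False
    then have "\<bar>a - b\<bar> powr (2 * (p - 1)) \<le> \<bar>a - b\<bar> powr 2"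
      using p by (intro powr_mono) auto
    then show ?thesis by simp
  qed
  finally show ?thesis by simp
qed

lemma Psi_diff_powr_conj_le:
  assumes p: "1 < p" "p \<le> 2"
  shows "\<bar>Psi p a - Psi p b\<bar> powr (p / (p - 1))
    \<le> 2 powr ((2 - p) / (p - 1)) * ((Psi p a - Psi p b) * (a - b))"
proof -
  define d where "d = \<bar>Psi p a - Psi p b\<bar>"
  have "d powr (1 / (p - 1)) \<le> (2 powr (2 - p) * \<bar>a - b\<bar> powr (p - 1)) powr (1 / (p - 1))"
    using Psi_diff_le[OF p] p by (auto simp: d_def intro: powr_mono2)
  also have "\<dots> = 2 powr ((2 - p) / (p - 1)) * \<bar>a - b\<bar>"
    using p by (simp add: powr_mult powr_powr)
  finally have root: "d powr (1 / (p - 1)) \<le> 2 powr ((2 - p) / (p - 1)) * \<bar>a - b\<bar>" .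
  have "p / (p - 1) = 1 + 1 / (p - 1)"
    using p by (simp add: field_simps)
  then have "d powr (p / (p - 1)) = d * d powr (1 / (p - 1))"
    by (cases "d = 0") (simp_all add: d_def powr_add)
  also have "\<dots> \<le> d * (2 powr ((2 - p) / (p - 1)) * \<bar>a - b\<bar>)"
    using root by (rule mult_left_mono) (simp add: d_def)
  also have "\<dots> = 2 powr ((2 - p) / (p - 1)) * (d * \<bar>a - b\<bar>)"
    by (simp add: ac_simps)
  also have "d * \<bar>a - b\<bar> = (Psi p a - Psi p b) * (a - b)"
    using Psi_diff_mult_nonneg[of p a b] p by (simp add: d_def abs_mult[symmetric])
  finally show ?thesis
    unfolding d_def .
qed

section \<open>The p-Laplacian of a weighted graph\<close>

definition wlap :: "real \<Rightarrow> 'i set \<Rightarrow> ('i \<Rightarrow> real) \<Rightarrow> ('i \<Rightarrow> 'i \<Rightarrow> real)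
    \<Rightarrow> ('i \<Rightarrow> real) \<Rightarrow> 'i \<Rightarrow> real"
  where "wlap p J h K u i = - (\<Sum>j\<in>J. h j * K i j * Psi p (u j - u i))"

definition wsqnorm :: "'i set \<Rightarrow> ('i \<Rightarrow> real) \<Rightarrow> ('i \<Rightarrow> real) \<Rightarrow> real"
  where "wsqnorm J h v = (\<Sum>i\<in>J. h i * (v i)\<^sup>2)"

lemma dplap_eq_wlap: "dplap p J c K u i = wlap p J (cellmeas c) K u i"
  by (simp add: dplap_def wlap_def)

lemma wlap_diff:
  "wlap p J h K u i - wlap p J h K v i = - (\<Sum>j\<in>J. h j * K i j * (Psi p (u j - u i) - Psi p (v j - v i)))"
  by (simp add: wlap_def sum_subtractf right_diff_distrib)

lemma wsqnorm_diff_expand: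
  "wsqnorm J h (\<lambda>i. e i - \<tau> * a i)
     = wsqnorm J h e - 2 * \<tau> * (\<Sum>i\<in>J. h i * a i * e i) + \<tau>\<^sup>2 * wsqnorm J h a"
proof -
  have "wsqnorm J h (\<lambda>i. e i - \<tau> * a i)
      = (\<Sum>i\<in>J. h i * (e i)\<^sup>2 - 2 * \<tau> * (h i * a i * e i) + \<tau>\<^sup>2 * (h i * (a i)\<^sup>2))"
    unfolding wsqnorm_def by (intro sum.cong) (simp_all add: power2_eq_square algebra_simps)
  then show ?thesis
    by (simp add: wsqnorm_def sum.distrib sum_subtractf sum_distrib_left)
qed

lemma wsqnorm_scale: "wsqnorm J h (\<lambda>i. a * v i) = a\<^sup>2 * wsqnorm J h v"
  by (simp add: wsqnorm_def sum_distrib_left power_mult_distrib ac_simps)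

lemma C2_eq: "1 < p \<Longrightarrow> p \<le> 2 \<Longrightarrow> C2 p = 2 powr (2 - p)"
  using ge_one_powr_ge_zero[of 2 "2 - p"] mult_right_le_one_le[of "2 powr (2 - p)" "p - 1"]
  by (auto simp: C2_def)

lemma Cn_mult_powr:
  assumes p: "1 < p" "p \<le> 2" and L: "0 < L"
  shows "Cn p L * (2 * L) powr (1 / (p - 1)) = 2 * (1 - 1 / p)"
proof -
  have "1 - p \<noteq> 0" "p - 1 \<noteq> 0"
    using p by auto
  then have exponents: "(p - 2) / (2 * (p - 1)) + (2 - p) / 2 * (1 / (1 - p)) + 1 / (p - 1) = 1"
    "1 / (1 - p) + 1 / (p - 1) = 0"
    by (simp_all add: divide_simps) (simp add: algebra_simps)
  have "sqrt (C2 p) = 2 powr ((2 - p) / 2)"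
    using C2_eq[OF p] by (simp add: powr_half_sqrt_powr)
  then have "Cn p L * (2 * L) powr (1 / (p - 1))
      = 2 powr ((p - 2) / (2 * (p - 1)) + (2 - p) / 2 * (1 / (1 - p)) + 1 / (p - 1))
        * L powr (1 / (1 - p) + 1 / (p - 1)) * (1 - 1 / p)"
    using L by (simp add: Cn_def powr_mult powr_powr powr_add)
  then show ?thesis
    using L exponents by simp
qed

lemma Cn_nonneg: "1 \<le> p \<Longrightarrow> 0 \<le> Cn p L"
  by (simp add: Cn_def)

locale weighted_kernel =
  fixes J :: "'i set" and h :: "'i \<Rightarrow> real" and K :: "'i \<Rightarrow> 'i \<Rightarrow> real"
    and L :: real
  assumes finite_J: "finite J"
    and weight_nonneg: "\<And>i. i \<in> J \<Longrightarrow> 0 \<le> h i"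
    and weight_sum: "sum h J = 1"
    and kernel_nonneg: "\<And>i j. i \<in> J \<Longrightarrow> j \<in> J \<Longrightarrow> 0 \<le> K i j"
    and kernel_sym: "\<And>i j. i \<in> J \<Longrightarrow> j \<in> J \<Longrightarrow> K i j = K j i"
    and row_sum_le: "\<And>i. i \<in> J \<Longrightarrow> (\<Sum>j\<in>J. h j * K i j) \<le> L"
begin

lemma edge_weight_nonneg: "i \<in> J \<Longrightarrow> j \<in> J \<Longrightarrow> 0 \<le> h j * K i j"
  by (simp add: weight_nonneg kernel_nonneg)

lemma row_sum_nonneg: "i \<in> J \<Longrightarrow> 0 \<le> (\<Sum>j\<in>J. h j * K i j)"
  by (simp add: edge_weight_nonneg sum_nonneg)

lemma bound_nonneg: "0 \<le> L"
proof -
  obtain i where "i \<in> J"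
    using weight_sum by fastforce
  then show ?thesis
    using row_sum_nonneg row_sum_le order_trans by blast
qed

lemma wsqnorm_nonneg: "0 \<le> wsqnorm J h v"
  by (simp add: wsqnorm_def weight_nonneg sum_nonneg)

lemma kernel_mean_powr_le:
  assumes i: "i \<in> J" and q: "1 \<le> q"
  shows "\<bar>\<Sum>j\<in>J. h j * K i j * x j\<bar> powr q
    \<le> L powr (q - 1) * (\<Sum>j\<in>J. h j * K i j * \<bar>x j\<bar> powr q)"
proof -
  have "\<bar>\<Sum>j\<in>J. h j * K i j * x j\<bar> \<le> (\<Sum>j\<in>J. \<bar>h j * K i j * x j\<bar>)"
    by (rule sum_abs)
  also have "\<dots> = (\<Sum>j\<in>J. h j * K i j * \<bar>x j\<bar>)"
    using weight_nonneg kernel_nonneg[OF i] by (intro sum.cong) (simp_all add: abs_mult)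
  finally have "\<bar>\<Sum>j\<in>J. h j * K i j * x j\<bar> powr q \<le> (\<Sum>j\<in>J. h j * K i j * \<bar>x j\<bar>) powr q"
    using q by (intro powr_mono2) auto
  also have "\<dots> \<le> (\<Sum>j\<in>J. h j * K i j) powr (q - 1) * (\<Sum>j\<in>J. h j * K i j * \<bar>x j\<bar> powr q)"
    using edge_weight_nonneg[OF i] q by (intro powr_weighted_sum_le finite_J) auto
  also have "\<dots> \<le> L powr (q - 1) * (\<Sum>j\<in>J. h j * K i j * \<bar>x j\<bar> powr q)"
    using row_sum_le[OF i] row_sum_nonneg[OF i] weight_nonneg kernel_nonneg[OF i] q
    by (intro mult_right_mono powr_mono2 sum_nonneg mult_nonneg_nonneg) auto
  finally show ?thesis .
qed

lemma sum_kernel_swap: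
  "(\<Sum>i\<in>J. h i * (\<Sum>j\<in>J. h j * K i j * F j)) = (\<Sum>i\<in>J. h i * (\<Sum>j\<in>J. h j * K i j) * F i)"
proof -
  have "(\<Sum>i\<in>J. h i * (\<Sum>j\<in>J. h j * K i j * F j)) = (\<Sum>i\<in>J. \<Sum>j\<in>J. h i * h j * K i j * F j)"
    by (simp add: sum_distrib_left mult.assoc)
  also have "\<dots> = (\<Sum>j\<in>J. \<Sum>i\<in>J. h i * h j * K i j * F j)"
    by (rule sum.swap)
  also have "\<dots> = (\<Sum>j\<in>J. \<Sum>i\<in>J. h j * (h i * K j i) * F j)"
  proof (intro sum.cong refl)
    fix i j assume ij: "i \<in> J" "j \<in> J"
    show "h i * h j * K i j * F j = h j * (h i * K j i) * F j"
      unfolding kernel_sym[OF ij] by (simp add: ac_simps)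
  qed
  also have "\<dots> = (\<Sum>j\<in>J. h j * (\<Sum>i\<in>J. h i * K j i) * F j)"
    by (simp add: sum_distrib_left sum_distrib_right)
  finally show ?thesis .
qed

lemma sum_row_sum_le:
  assumes "\<And>i. i \<in> J \<Longrightarrow> 0 \<le> F i"
  shows "(\<Sum>i\<in>J. h i * (\<Sum>j\<in>J. h j * K i j) * F i) \<le> L * (\<Sum>i\<in>J. h i * F i)"
proof -
  have "(\<Sum>i\<in>J. h i * (\<Sum>j\<in>J. h j * K i j) * F i) \<le> (\<Sum>i\<in>J. h i * L * F i)"
    using assms weight_nonneg row_sum_le by (intro sum_mono mult_right_mono mult_left_mono) auto
  then show ?thesis
    by (simp add: sum_distrib_left ac_simps)
qed

lemma sum_kernel_antisym:
  assumes "\<And>i j. D j i = - D i j"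
  shows "2 * (\<Sum>i\<in>J. h i * (\<Sum>j\<in>J. h j * K i j * D i j) * e i)
    = - (\<Sum>i\<in>J. \<Sum>j\<in>J. h i * h j * K i j * (D i j * (e j - e i)))"
proof -
  define T where "T = (\<Sum>i\<in>J. \<Sum>j\<in>J. h i * h j * K i j * D i j * e i)"
  have "(\<Sum>i\<in>J. \<Sum>j\<in>J. h i * h j * K i j * D i j * e j) = (\<Sum>j\<in>J. \<Sum>i\<in>J. h i * h j * K i j * D i j * e j)"
    by (rule sum.swap)
  also have "\<dots> = (\<Sum>j\<in>J. \<Sum>i\<in>J. - (h j * h i * K j i * D j i * e j))"
  proof (intro sum.cong refl)
    fix i j assume ij: "i \<in> J" "j \<in> J"
    show "h i * h j * K i j * D i j * e j = - (h j * h i * K j i * D j i * e j)"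
      unfolding kernel_sym[OF ij] assms[of i j] by (simp add: ac_simps)
  qed
  also have "\<dots> = - T"
    by (simp add: T_def sum_negf)
  finally have "(\<Sum>i\<in>J. \<Sum>j\<in>J. h i * h j * K i j * D i j * e j) = - T" .
  moreover have "(\<Sum>i\<in>J. h i * (\<Sum>j\<in>J. h j * K i j * D i j) * e i) = T"
    by (simp add: T_def sum_distrib_left sum_distrib_right mult.assoc)
  ultimately show ?thesis
    by (simp add: T_def right_diff_distrib sum_subtractf mult.assoc)
qed

lemma wlap_diff_sq_le:
  assumes p: "1 < p" "p \<le> 2" and i: "i \<in> J"
  shows "(wlap p J h K u i - wlap p J h K v i)\<^sup>2 \<le> 4 * L * ((\<Sum>j\<in>J. h j * K i j) * (1 + 2 * (u i - v i)\<^sup>2)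
    + 2 * (\<Sum>j\<in>J. h j * K i j * (u j - v j)\<^sup>2))"
proof -
  define e where "e j = u j - v j" for j
  define D where "D j = Psi p (u j - u i) - Psi p (v j - v i)" for j
  have D_sq: "(D j)\<^sup>2 \<le> 4 * (1 + 2 * (e i)\<^sup>2 + 2 * (e j)\<^sup>2)" for j
  proof -
    have "(D j)\<^sup>2 \<le> 4 * (1 + (e j - e i)\<^sup>2)"
      using Psi_diff_sq_le[OF p, of "u j - u i" "v j - v i"] by (simp add: D_def e_def algebra_simps)
    moreover have "(e j - e i)\<^sup>2 \<le> 2 * (e i)\<^sup>2 + 2 * (e j)\<^sup>2"
      using zero_le_power2[of "e i + e j"] by (simp add: power2_eq_square algebra_simps)
    ultimately show ?thesis
      by simp
  qed
  have "(wlap p J h K u i - wlap p J h K v i)\<^sup>2 = \<bar>\<Sum>j\<in>J. h j * K i j * D j\<bar> powr 2"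
    by (simp add: wlap_diff D_def)
  also have "\<dots> \<le> L * (\<Sum>j\<in>J. h j * K i j * (D j)\<^sup>2)"
    using kernel_mean_powr_le[OF i, of 2 D] bound_nonneg by simp
  also have "\<dots> \<le> L * (\<Sum>j\<in>J. h j * K i j * (4 * (1 + 2 * (e i)\<^sup>2 + 2 * (e j)\<^sup>2)))"
    using D_sq edge_weight_nonneg[OF i] bound_nonneg by (intro mult_left_mono sum_mono) auto
  also have "\<dots> = 4 * L * ((\<Sum>j\<in>J. h j * K i j) * (1 + 2 * (e i)\<^sup>2)
      + 2 * (\<Sum>j\<in>J. h j * K i j * (e j)\<^sup>2))"
    by (simp add: algebra_simps sum.distrib sum_distrib_left sum_distrib_right)
  finally show ?thesis
    by (simp add: e_def)
qed

lemma wsqnorm_wlap_diff_le: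
  assumes p: "1 < p" "p \<le> 2"
  shows "wsqnorm J h (\<lambda>i. wlap p J h K u i - wlap p J h K v i)
    \<le> 4 * L\<^sup>2 * (1 + 4 * wsqnorm J h (\<lambda>i. u i - v i))"
proof -
  define e where "e i = u i - v i" for i
  define R where "R i = (\<Sum>j\<in>J. h j * K i j)" for i
  have "wsqnorm J h (\<lambda>i. wlap p J h K u i - wlap p J h K v i)
      \<le> (\<Sum>i\<in>J. h i * (4 * L * (R i * (1 + 2 * (e i)\<^sup>2) + 2 * (\<Sum>j\<in>J. h j * K i j * (e j)\<^sup>2))))"
    unfolding wsqnorm_def R_def e_def using wlap_diff_sq_le[OF p] weight_nonneg
    by (intro sum_mono mult_left_mono) auto
  also have "\<dots> = 4 * L * ((\<Sum>i\<in>J. h i * R i * (1 + 2 * (e i)\<^sup>2))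
      + 2 * (\<Sum>i\<in>J. h i * (\<Sum>j\<in>J. h j * K i j * (e j)\<^sup>2)))"
    by (simp add: algebra_simps sum.distrib sum_distrib_left)
  also have "(\<Sum>i\<in>J. h i * (\<Sum>j\<in>J. h j * K i j * (e j)\<^sup>2)) = (\<Sum>i\<in>J. h i * R i * (e i)\<^sup>2)"
    unfolding R_def by (rule sum_kernel_swap)
  also have "(\<Sum>i\<in>J. h i * R i * (1 + 2 * (e i)\<^sup>2)) + 2 * (\<Sum>i\<in>J. h i * R i * (e i)\<^sup>2)
      = (\<Sum>i\<in>J. h i * R i * (1 + 4 * (e i)\<^sup>2))"
    by (simp add: algebra_simps sum.distrib sum_distrib_left)
  also have "4 * L * \<dots> \<le> 4 * L * (L * (\<Sum>i\<in>J. h i * (1 + 4 * (e i)\<^sup>2)))"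
    unfolding R_def using bound_nonneg by (intro mult_left_mono sum_row_sum_le) auto
  also have "(\<Sum>i\<in>J. h i * (1 + 4 * (e i)\<^sup>2)) = 1 + 4 * wsqnorm J h (\<lambda>i. u i - v i)"
    by (simp add: wsqnorm_def e_def weight_sum distrib_left sum.distrib sum_distrib_left
        mult.left_commute)
  finally show ?thesis
    by (simp add: power2_eq_square)
qed

lemma inner_wlap_diff_eq:
  "2 * (\<Sum>i\<in>J. h i * (wlap p J h K u i - wlap p J h K v i) * (u i - v i))
    = (\<Sum>i\<in>J. \<Sum>j\<in>J. h i * h j * K i j
        * ((Psi p (u j - u i) - Psi p (v j - v i)) * ((u j - u i) - (v j - v i))))"
proof -
  define D where "D i j = Psi p (u j - u i) - Psi p (v j - v i)" for i j
  have antisym: "D j i = - D i j" for i j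
    using Psi_minus[of p "u j - u i"] Psi_minus[of p "v j - v i"] by (simp add: D_def)
  have diff: "(u j - v j) - (u i - v i) = (u j - u i) - (v j - v i)" for i j
    by simp
  have "2 * (\<Sum>i\<in>J. h i * (wlap p J h K u i - wlap p J h K v i) * (u i - v i))
      = - (2 * (\<Sum>i\<in>J. h i * (\<Sum>j\<in>J. h j * K i j * D i j) * (u i - v i)))"
    by (simp add: wlap_diff D_def sum_negf)
  also have "\<dots> = (\<Sum>i\<in>J. \<Sum>j\<in>J. h i * h j * K i j * (D i j * ((u j - v j) - (u i - v i))))"
    using sum_kernel_antisym[of D, OF antisym] by simp
  finally show ?thesis
    by (simp only: diff D_def)
qed

lemma inner_wlap_diff_nonneg:
  assumes "1 \<le> p"
  shows "0 \<le> (\<Sum>i\<in>J. h i * (wlap p J h K u i - wlap p J h K v i) * (u i - v i))"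
proof -
  have "0 \<le> (\<Sum>i\<in>J. \<Sum>j\<in>J. h i * h j * K i j
      * ((Psi p (u j - u i) - Psi p (v j - v i)) * ((u j - u i) - (v j - v i))))"
    by (intro sum_nonneg mult_nonneg_nonneg[OF _ Psi_diff_mult_nonneg[OF assms]])
      (simp add: weight_nonneg kernel_nonneg)
  then show ?thesis
    using inner_wlap_diff_eq[of p u v] by simp
qed

lemma abs_wlap_diff_powr_le:
  assumes p: "1 < p" "p \<le> 2" and i: "i \<in> J"
  shows "\<bar>wlap p J h K u i - wlap p J h K v i\<bar> powr (p / (p - 1))
    \<le> L powr (1 / (p - 1)) * 2 powr ((2 - p) / (p - 1)) * (\<Sum>j\<in>J. h j * K i j
      * ((Psi p (u j - u i) - Psi p (v j - v i)) * ((u j - u i) - (v j - v i))))"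
proof -
  define D where "D j = Psi p (u j - u i) - Psi p (v j - v i)" for j
  have q: "1 \<le> p / (p - 1)" "p / (p - 1) - 1 = 1 / (p - 1)"
    using p by (simp_all add: field_simps)
  have "\<bar>wlap p J h K u i - wlap p J h K v i\<bar> powr (p / (p - 1))
      = \<bar>\<Sum>j\<in>J. h j * K i j * D j\<bar> powr (p / (p - 1))"
    by (simp add: D_def wlap_diff)
  also have "\<dots> \<le> L powr (1 / (p - 1)) * (\<Sum>j\<in>J. h j * K i j * \<bar>D j\<bar> powr (p / (p - 1)))"
    using kernel_mean_powr_le[OF i q(1)] by (simp only: q(2))
  also have "\<dots> \<le> L powr (1 / (p - 1)) * (\<Sum>j\<in>J. h j * K i j
      * (2 powr ((2 - p) / (p - 1)) * (D j * ((u j - u i) - (v j - v i)))))"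
    using Psi_diff_powr_conj_le[OF p] edge_weight_nonneg[OF i]
    by (intro mult_left_mono sum_mono) (auto simp: D_def)
  finally show ?thesis
    by (simp add: D_def sum_distrib_left ac_simps)
qed

lemma wlap_diff_powr_le_inner:
  assumes p: "1 < p" "p \<le> 2"
  shows "sqrt (wsqnorm J h (\<lambda>i. wlap p J h K u i - wlap p J h K v i)) powr (p / (p - 1))
    \<le> (2 * L) powr (1 / (p - 1)) * (\<Sum>i\<in>J. h i * (wlap p J h K u i - wlap p J h K v i) * (u i - v i))"
proof -
  define q where "q = p / (p - 1)"
  define A where "A i = wlap p J h K u i - wlap p J h K v i" for i
  define X where "X i j = (Psi p (u j - u i) - Psi p (v j - v i)) * ((u j - u i) - (v j - v i))" for i j
  have "2 \<le> q"
    using p by (simp add: q_def field_simps)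
  have "sqrt (wsqnorm J h A) powr q = (\<Sum>i\<in>J. h i * \<bar>A i\<bar> powr 2) powr (q / 2)"
    using wsqnorm_nonneg by (simp add: wsqnorm_def powr_half_sqrt[symmetric] powr_powr)
  also have "\<dots> \<le> (\<Sum>i\<in>J. h i) powr (q / 2 - 1) * (\<Sum>i\<in>J. h i * (\<bar>A i\<bar> powr 2) powr (q / 2))"
    using weight_nonneg \<open>2 \<le> q\<close> by (intro powr_weighted_sum_le finite_J) auto
  also have "\<dots> = (\<Sum>i\<in>J. h i * \<bar>A i\<bar> powr q)"
    by (simp add: weight_sum powr_powr del: powr_numeral)
  also have "\<dots> \<le> (\<Sum>i\<in>J. h i * (L powr (1 / (p - 1)) * 2 powr ((2 - p) / (p - 1))
      * (\<Sum>j\<in>J. h j * K i j * X i j)))"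
    unfolding A_def X_def q_def using abs_wlap_diff_powr_le[OF p] weight_nonneg
    by (intro sum_mono mult_left_mono) auto
  also have "\<dots> = L powr (1 / (p - 1)) * 2 powr ((2 - p) / (p - 1))
      * (\<Sum>i\<in>J. \<Sum>j\<in>J. h i * h j * K i j * X i j)"
    unfolding sum_distrib_left by (intro sum.cong refl) (simp add: ac_simps)
  also have "(\<Sum>i\<in>J. \<Sum>j\<in>J. h i * h j * K i j * X i j) = 2 * (\<Sum>i\<in>J. h i * A i * (u i - v i))"
    using inner_wlap_diff_eq[of p u v] by (simp add: X_def A_def)
  also have "L powr (1 / (p - 1)) * 2 powr ((2 - p) / (p - 1)) * (2 * (\<Sum>i\<in>J. h i * A i * (u i - v i)))
      = (2 * L) powr (1 / (p - 1)) * (\<Sum>i\<in>J. h i * A i * (u i - v i))"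
  proof -
    have "(2 - p) / (p - 1) + 1 = 1 / (p - 1)"
      using p by (simp add: field_simps)
    then have "2 powr ((2 - p) / (p - 1)) * 2 = 2 powr (1 / (p - 1))"
      using powr_add[of 2 "(2 - p) / (p - 1)" 1] by simp
    then show ?thesis
      using bound_nonneg by (simp add: powr_mult ac_simps)
  qed
  finally show ?thesis
    by (simp add: q_def A_def)
qed

lemma step_mult_wsqnorm_le_inner:
  assumes p: "1 < p" "p \<le> 2"
    and step: "0 < L \<Longrightarrow> 0 < wsqnorm J h (\<lambda>i. wlap p J h K u i - wlap p J h K v i) \<Longrightarrow>
      \<tau> \<le> 2 * Cn p L * sqrt (wsqnorm J h (\<lambda>i. wlap p J h K u i - wlap p J h K v i)) powr ((2 - p) / (p - 1))"
  shows "\<tau> * wsqnorm J h (\<lambda>i. wlap p J h K u i - wlap p J h K v i)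
    \<le> 2 * (\<Sum>i\<in>J. h i * (wlap p J h K u i - wlap p J h K v i) * (u i - v i))"
proof -
  define G where "G = (\<Sum>i\<in>J. h i * (wlap p J h K u i - wlap p J h K v i) * (u i - v i))"
  define N where "N = sqrt (wsqnorm J h (\<lambda>i. wlap p J h K u i - wlap p J h K v i))"
  have G: "0 \<le> G"
    using inner_wlap_diff_nonneg p by (simp add: G_def)
  have N: "0 \<le> N" "N\<^sup>2 = wsqnorm J h (\<lambda>i. wlap p J h K u i - wlap p J h K v i)"
    using wsqnorm_nonneg by (simp_all add: N_def)
  have coercive: "N powr (p / (p - 1)) \<le> (2 * L) powr (1 / (p - 1)) * G"
    using wlap_diff_powr_le_inner[OF p] by (simp add: N_def G_def)
  have "\<tau> * N\<^sup>2 \<le> 2 * G"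
  proof (cases "0 < L \<and> 0 < N")
    case False
    then have "N = 0"
      using coercive p N(1) bound_nonneg by (cases "L = 0") auto
    then show ?thesis
      using G by simp
  next
    case True
    then have "\<tau> * N\<^sup>2 \<le> 2 * Cn p L * N powr ((2 - p) / (p - 1)) * N powr 2"
      using step by (simp add: N_def mult_right_mono)
    also have "\<dots> = 2 * Cn p L * N powr (p / (p - 1))"
    proof -
      have "(2 - p) / (p - 1) + 2 = p / (p - 1)"
        using p by (simp add: field_simps)
      then show ?thesis
        by (simp only: mult.assoc powr_add[symmetric])
    qed
    also have "\<dots> \<le> 2 * Cn p L * ((2 * L) powr (1 / (p - 1)) * G)"
      using coercive Cn_nonneg[of p L] p by (intro mult_left_mono) simp_all
    also have "\<dots> = 4 * (1 - 1 / p) * G"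
      using Cn_mult_powr[OF p, of L] True by simp
    also have "\<dots> \<le> 2 * G"
      using G p by (intro mult_right_mono) (simp_all add: field_simps)
    finally show ?thesis .
  qed
  then show ?thesis
    by (simp add: N(2) G_def)
qed

lemma wsqnorm_explicit_step_le:
  assumes p: "1 < p" "p \<le> 2" and "0 \<le> \<tau>"
    and step: "0 < L \<Longrightarrow> 0 < wsqnorm J h (\<lambda>i. wlap p J h K u i - wlap p J h K v i) \<Longrightarrow>
      \<tau> \<le> 2 * Cn p L * sqrt (wsqnorm J h (\<lambda>i. wlap p J h K u i - wlap p J h K v i)) powr ((2 - p) / (p - 1))"
  shows "wsqnorm J h (\<lambda>i. (u i - v i) - \<tau> * (wlap p J h K u i - wlap p J h K v i))
    \<le> wsqnorm J h (\<lambda>i. u i - v i)"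
proof -
  define A where "A = (\<lambda>i. wlap p J h K u i - wlap p J h K v i)"
  define G where "G = (\<Sum>i\<in>J. h i * A i * (u i - v i))"
  have "\<tau> * (\<tau> * wsqnorm J h A) \<le> \<tau> * (2 * G)"
    using step_mult_wsqnorm_le_inner[OF p step] \<open>0 \<le> \<tau>\<close>
    by (intro mult_left_mono) (simp_all add: A_def G_def)
  then show ?thesis
    using wsqnorm_diff_expand[of J h "\<lambda>i. u i - v i" \<tau> A]
    by (simp add: power2_eq_square G_def A_def)
qed

end

section \<open>Cellwise constant functions\<close>

lemma L2norm_nonneg: "0 \<le> L2norm F"
  by (simp add: L2norm_def)

lemma Omega_eq_cbox: "Omega = cbox (0 :: real^'d::finite) 1"
  by (auto simp: Omega_def mem_box_cart)

lemma measure_Omega: "measure lebesgue (Omega :: (real^'d::finite) set) = 1"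
proof -
  have "(0 :: real^'d) \<in> cbox 0 1"
    by (simp add: mem_box_cart)
  then have "cbox (0 :: real^'d) 1 \<noteq> {}"
    by blast
  then show ?thesis
    by (simp add: Omega_eq_cbox content_cbox_cart)
qed

locale cell_partition =
  fixes J :: "'i set" and c :: "'i \<Rightarrow> (real^'d::finite) set"
  assumes partition: "is_cell_partition J c"
begin

lemma finite_J: "finite J"
  using partition by (simp add: is_cell_partition_def)

lemma cell_subset: "i \<in> J \<Longrightarrow> c i \<subseteq> Omega"
  using partition unfolding is_cell_partition_def by blast

lemma cell_lmeasurable: "i \<in> J \<Longrightarrow> c i \<in> lmeasurable"
  using partition cell_subset unfolding is_cell_partition_def Omega_eq_cbox
  by (metis bounded_cbox bounded_set_imp_lmeasurable bounded_subset)

lemma cell_disjoint: "i \<in> J \<Longrightarrow> j \<in> J \<Longrightarrow> x \<in> c i \<Longrightarrow> x \<in> c j \<Longrightarrow> i = j"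
  using partition unfolding is_cell_partition_def by blast

lemma cell_cover:
  assumes "x \<in> Omega"
  obtains i where "i \<in> J" "x \<in> c i"
proof -
  have "x \<in> (\<Union>i\<in>J. c i)"
    using partition assms unfolding is_cell_partition_def by simp
  then show ?thesis
    using that by blast
qed

lemma cell_nonempty:
  assumes "i \<in> J"
  obtains x where "x \<in> c i"
proof -
  have "\<exists>a b r. 0 < r \<and> (\<forall>l. b $ l = a $ l + r) \<and> box a b \<subseteq> c i \<and> c i \<subseteq> cbox a b"
    using partition assms unfolding is_cell_partition_def by simp
  then obtain a b :: "real^'d" and r where r: "0 < r" "\<forall>l. b $ l = a $ l + r" "box a b \<subseteq> c i"
    by blast
  then have "(\<chi> l. a $ l + r / 2) \<in> c i"
    by (auto simp: mem_box_cart)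
  then show ?thesis
    using that by blast
qed

lemma inj_eq_on_cell: "i \<in> J \<Longrightarrow> x \<in> c i \<Longrightarrow> inj J c v x = v i"
  unfolding inj_def using finite_J cell_disjoint
  by (subst sum.remove[of _ i]) (auto intro!: sum.neutral simp: indicator_def)

lemma inj2_eq_on_cell: "i \<in> J \<Longrightarrow> x \<in> c i \<Longrightarrow> inj2 J c K x y = inj J c (K i) y"
proof -
  have "inj2 J c K x y = inj J c (\<lambda>a. inj J c (K a) y) x"
    unfolding inj2_def inj_def by (simp add: sum_distrib_left ac_simps)
  then show "i \<in> J \<Longrightarrow> x \<in> c i \<Longrightarrow> ?thesis"
    by (simp add: inj_eq_on_cell)
qed

lemma integral_cellwise_const:
  assumes "\<And>i x. i \<in> J \<Longrightarrow> x \<in> c i \<Longrightarrow> F x = w i"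
  shows "(\<integral>x. F x \<partial>lebesgue_on Omega) = (\<Sum>i\<in>J. cellmeas c i * w i)"
proof -
  have Omega: "(Omega :: (real^'d) set) \<in> sets lebesgue"
    by (simp add: Omega_eq_cbox)
  have cell_measure: "measure (lebesgue_on Omega) (c i) = cellmeas c i" if "i \<in> J" for i
    unfolding cellmeas_def using Omega cell_subset[OF that] by (intro measure_restrict_space) auto
  have integrable: "integrable (lebesgue_on Omega) (indicat_real (c i))" if "i \<in> J" for i
  proof -
    have Omega': "(Omega :: (real^'d) set) \<inter> space lebesgue \<in> sets lebesgue"
      using Omega by simp
    have "c i \<in> sets (lebesgue_on Omega)"
      using sets_restrict_space_iff[OF Omega'] cell_subset[OF that] cell_lmeasurable[OF that] by blast
    moreover have "emeasure (lebesgue_on Omega) (c i) < \<infinity>"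
      using emeasure_restrict_space[OF Omega' cell_subset[OF that]]
        fmeasurableD2[OF cell_lmeasurable[OF that]]
      by (simp add: less_top)
    ultimately show ?thesis
      using cell_subset[OF that] by (simp add: integrable_indicator_iff Int_absorb2)
  qed
  have "(\<integral>x. F x \<partial>lebesgue_on Omega) = (\<integral>x. inj J c w x \<partial>lebesgue_on Omega)"
  proof (intro Bochner_Integration.integral_cong refl)
    fix x :: "real^'d" assume "x \<in> space (lebesgue_on Omega)"
    then obtain i where "i \<in> J" "x \<in> c i"
      using cell_cover by auto
    then show "F x = inj J c w x"
      using assms inj_eq_on_cell by simp
  qed
  also have "\<dots> = (\<Sum>i\<in>J. w i * measure (lebesgue_on Omega) (c i))"
    unfolding inj_def using integrable
    by (simp add: Bochner_Integration.integral_sum Int_absorb2 cell_subset cong: sum.cong)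
  also have "\<dots> = (\<Sum>i\<in>J. cellmeas c i * w i)"
    using cell_measure by (simp add: mult.commute)
  finally show ?thesis .
qed

lemma cellmeas_nonneg: "0 \<le> cellmeas c i"
  by (simp add: cellmeas_def)

lemma sum_cellmeas: "sum (cellmeas c) J = 1"
proof -
  have "(\<integral>x. 1 \<partial>lebesgue_on (Omega :: (real^'d) set)) = (\<Sum>i\<in>J. cellmeas c i * 1)"
    by (rule integral_cellwise_const) simp
  moreover have "(\<integral>x. 1 \<partial>lebesgue_on (Omega :: (real^'d) set))
      = measure (lebesgue_on (Omega :: (real^'d) set)) Omega"
    by simp
  also have "\<dots> = measure lebesgue (Omega :: (real^'d) set)"
    by (intro measure_restrict_space) (simp_all add: Omega_eq_cbox)
  finally show ?thesis
    by (simp add: measure_Omega)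
qed

lemma L2norm_cellwise_const:
  assumes "\<And>i x. i \<in> J \<Longrightarrow> x \<in> c i \<Longrightarrow> F x = w i"
  shows "L2norm F = sqrt (wsqnorm J (cellmeas c) w)"
  unfolding L2norm_def wsqnorm_def using assms by (subst integral_cellwise_const) auto

lemma cplap_inj_eq_dplap:
  assumes "i \<in> J" "x \<in> c i"
  shows "cplap p (inj2 J c K) (inj J c u) x = dplap p J c K u i"
proof -
  have "(\<integral>y. inj2 J c K x y * Psi p (inj J c u y - inj J c u x) \<partial>lebesgue_on Omega)
      = (\<Sum>j\<in>J. cellmeas c j * (K i j * Psi p (u j - u i)))"
    using assms by (intro integral_cellwise_const) (simp add: inj2_eq_on_cell inj_eq_on_cell)
  then show ?thesis
    by (simp add: cplap_def dplap_def ac_simps)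
qed

lemma row_sum_le_Linf1norm:
  assumes K_nonneg: "\<And>i j. i \<in> J \<Longrightarrow> j \<in> J \<Longrightarrow> 0 \<le> K i j" and i: "i \<in> J"
  shows "(\<Sum>j\<in>J. cellmeas c j * K i j) \<le> Linf1norm (inj2 J c K)"
proof -
  define row where "row x = (\<integral>y. \<bar>inj2 J c K x y\<bar> \<partial>lebesgue_on Omega)" for x
  have row_eq: "row x = (\<Sum>j\<in>J. cellmeas c j * K a j)" if "a \<in> J" "x \<in> c a" for a x
    unfolding row_def using that K_nonneg
    by (intro integral_cellwise_const) (simp add: inj2_eq_on_cell inj_eq_on_cell)
  have "bdd_above (row ` Omega)"
  proof (rule bdd_aboveI2)
    fix x :: "real^'d" assume "x \<in> Omega"
    then obtain a where a: "a \<in> J" "x \<in> c a"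
      using cell_cover by blast
    have "(\<Sum>j\<in>J. cellmeas c j * K a j) \<le> (\<Sum>b\<in>J. \<Sum>j\<in>J. cellmeas c j * K b j)"
      using a finite_J K_nonneg cellmeas_nonneg
      by (intro member_le_sum) (auto intro!: sum_nonneg)
    then show "row x \<le> (\<Sum>b\<in>J. \<Sum>j\<in>J. cellmeas c j * K b j)"
      using row_eq[OF a] by simp
  qed
  moreover obtain x where x: "x \<in> c i"
    using cell_nonempty[OF i] by blast
  ultimately have "row x \<le> (SUP x\<in>Omega. row x)"
    using cell_subset[OF i] by (intro cSUP_upper) auto
  then show ?thesis
    using row_eq[OF i x] by (simp add: Linf1norm_def row_def)
qed

lemma weighted_kernel_cellmeas:
  assumes "\<And>i j. i \<in> J \<Longrightarrow> j \<in> J \<Longrightarrow> 0 \<le> K i j"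
    and "\<And>i j. i \<in> J \<Longrightarrow> j \<in> J \<Longrightarrow> K i j = K j i"
  shows "weighted_kernel J (cellmeas c) K (Linf1norm (inj2 J c K))"
  using assms finite_J cellmeas_nonneg sum_cellmeas row_sum_le_Linf1norm
  by unfold_locales auto

end

section \<open>The explicit scheme\<close>

lemma step_le_tau: "k \<in> {1..N} \<Longrightarrow> t k - t (k - 1) \<le> tau t N"
  unfolding tau_def by (rule Max_ge) auto

lemma pw_eq_powr: "0 < x \<Longrightarrow> pw x e = x powr e"
  by (simp add: pw_def)

lemma time_partition_less: "time_partition t N \<Longrightarrow> k \<in> {1..N} \<Longrightarrow> t (k - 1) < t k"
  by (simp add: time_partition_def)

lemma explicit_scheme_step:
  assumes "time_partition t N" "explicit_scheme p J c K f g t N u" "m \<in> {1..N}" "i \<in> J"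
  shows "u m i = u (m - 1) i - (t m - t (m - 1)) * (dplap p J c K (u (m - 1)) i - f i)"
proof -
  have "0 < t m - t (m - 1)"
    using time_partition_less[OF assms(1,3)] by simp
  moreover have "(u m i - u (m - 1) i) / (t m - t (m - 1)) = - dplap p J c K (u (m - 1)) i + f i"
    using assms(2-4) by (simp add: explicit_scheme_def)
  ultimately show ?thesis
    by (simp add: field_simps)
qed

lemma linear_interpolation_diff:
  fixes a r s t0 t1 :: real
  assumes "t0 < t1"
  shows "(t1 - s) / (t1 - t0) * a + (s - t0) / (t1 - t0) * (a - (t1 - t0) * r) - a = - (s - t0) * r"
proof -
  have "t1 - t0 \<noteq> 0"
    using assms by simp
  then show ?thesis
    by (simp add: divide_simps) (simp add: algebra_simps)
qed

context cell_partition
begin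

lemma L2norm_residual:
  "L2norm (\<lambda>x. cplap p (inj2 J c K) (inj J c v) x - inj J c f x)
    = sqrt (wsqnorm J (cellmeas c) (\<lambda>i. dplap p J c K v i - f i))"
  by (rule L2norm_cellwise_const) (simp add: cplap_inj_eq_dplap inj_eq_on_cell)

lemma L2norm_utilde_minus_ubar:
  assumes "time_partition t N" "explicit_scheme p J c K f g t N u" "k \<in> {1..N}" "t (k - 1) \<le> s"
  shows "L2norm (\<lambda>x. utilde J c t u k s x - ubar J c u k x)
    = (s - t (k - 1)) * sqrt (wsqnorm J (cellmeas c) (\<lambda>i. dplap p J c K (u (k - 1)) i - f i))"
proof -
  have "L2norm (\<lambda>x. utilde J c t u k s x - ubar J c u k x)
      = sqrt (wsqnorm J (cellmeas c) (\<lambda>i. - (s - t (k - 1)) * (dplap p J c K (u (k - 1)) i - f i)))"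
  proof (rule L2norm_cellwise_const)
    fix i x assume i: "i \<in> J" and x: "x \<in> c i"
    from time_partition_less[OF assms(1,3)]
    show "utilde J c t u k s x - ubar J c u k x
      = - (s - t (k - 1)) * (dplap p J c K (u (k - 1)) i - f i)"
      unfolding utilde_def ubar_def inj_eq_on_cell[OF i x] explicit_scheme_step[OF assms(1-3) i]
      by (rule linear_interpolation_diff)
  qed
  then show ?thesis
    using assms(4) by (simp add: wsqnorm_scale real_sqrt_mult)
qed

lemma explicit_scheme_error_step_le:
  assumes p: "1 < p" "p \<le> 2"
    and K_nonneg: "\<And>i j. i \<in> J \<Longrightarrow> j \<in> J \<Longrightarrow> 0 \<le> K i j"
    and K_sym: "\<And>i j. i \<in> J \<Longrightarrow> j \<in> J \<Longrightarrow> K i j = K j i"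
    and ustar: "\<And>i. i \<in> J \<Longrightarrow> dplap p J c K us i = f i"
    and scheme: "time_partition t N" "explicit_scheme p J c K f g t N u" "step_ok p J c K f t N u"
    and m: "Suc m \<in> {1..N}"
  shows "wsqnorm J (cellmeas c) (\<lambda>i. u (Suc m) i - us i)
    \<le> wsqnorm J (cellmeas c) (\<lambda>i. u m i - us i)"
proof -
  interpret weighted_kernel J "cellmeas c" K "Linf1norm (inj2 J c K)"
    using K_nonneg K_sym by (rule weighted_kernel_cellmeas)
  define \<tau> where "\<tau> = t (Suc m) - t m"
  let ?A = "\<lambda>i. wlap p J (cellmeas c) K (u m) i - wlap p J (cellmeas c) K us i"
  have residual: "dplap p J c K (u m) i - f i = ?A i" if "i \<in> J" for i
    using ustar[OF that] by (simp add: dplap_eq_wlap)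
  have "wsqnorm J (cellmeas c) (\<lambda>i. u (Suc m) i - us i)
      = wsqnorm J (cellmeas c) (\<lambda>i. (u m i - us i) - \<tau> * ?A i)"
    unfolding wsqnorm_def
  proof (intro sum.cong refl)
    fix i assume i: "i \<in> J"
    have "u (Suc m) i - us i = (u m i - us i) - \<tau> * ?A i"
      using explicit_scheme_step[OF scheme(1,2) m i] residual[OF i] by (simp add: \<tau>_def)
    then show "cellmeas c i * (u (Suc m) i - us i)\<^sup>2 = cellmeas c i * ((u m i - us i) - \<tau> * ?A i)\<^sup>2"
      by (simp only:)
  qed
  also have "\<dots> \<le> wsqnorm J (cellmeas c) (\<lambda>i. u m i - us i)"
  proof (rule wsqnorm_explicit_step_le[OF p])
    show "0 \<le> \<tau>"
      using time_partition_less[OF scheme(1) m] by (simp add: \<tau>_def)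
    assume "0 < Linf1norm (inj2 J c K)" and W: "0 < wsqnorm J (cellmeas c) ?A"
    then have "\<tau> \<le> 2 * Cn p (Linf1norm (inj2 J c K))
        * pw (L2norm (\<lambda>x. cplap p (inj2 J c K) (inj J c (u m)) x - inj J c f x)) ((2 - p) / (p - 1))"
      using bspec[OF scheme(3)[unfolded step_ok_def] m] by (simp add: \<tau>_def)
    moreover have "L2norm (\<lambda>x. cplap p (inj2 J c K) (inj J c (u m)) x - inj J c f x)
        = sqrt (wsqnorm J (cellmeas c) ?A)"
      unfolding L2norm_residual wsqnorm_def using residual by (simp cong: sum.cong)
    ultimately show "\<tau> \<le> 2 * Cn p (Linf1norm (inj2 J c K))
        * sqrt (wsqnorm J (cellmeas c) ?A) powr ((2 - p) / (p - 1))"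
      using W by (simp add: pw_eq_powr)
  qed
  finally show ?thesis .
qed

lemma explicit_scheme_error_le:
  assumes p: "1 < p" "p \<le> 2"
    and K_nonneg: "\<And>i j. i \<in> J \<Longrightarrow> j \<in> J \<Longrightarrow> 0 \<le> K i j"
    and K_sym: "\<And>i j. i \<in> J \<Longrightarrow> j \<in> J \<Longrightarrow> K i j = K j i"
    and ustar: "\<And>i. i \<in> J \<Longrightarrow> dplap p J c K us i = f i"
    and scheme: "time_partition t N" "explicit_scheme p J c K f g t N u" "step_ok p J c K f t N u"
  shows "m \<le> N \<Longrightarrow>
    wsqnorm J (cellmeas c) (\<lambda>i. u m i - us i) \<le> wsqnorm J (cellmeas c) (\<lambda>i. g i - us i)"
proof (induction m)
  case 0
  show ?case
    using scheme(2) unfolding wsqnorm_def explicit_scheme_def by simp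
next
  case (Suc m)
  then show ?case
    using explicit_scheme_error_step_le[OF p K_nonneg K_sym ustar scheme, of m] by simp
qed

lemma interpolation_error_le:
  assumes p: "1 < p" "p \<le> 2"
    and K_nonneg: "\<And>i j. i \<in> J \<Longrightarrow> j \<in> J \<Longrightarrow> 0 \<le> K i j"
    and K_sym: "\<And>i j. i \<in> J \<Longrightarrow> j \<in> J \<Longrightarrow> K i j = K j i"
    and ustar: "\<And>i. i \<in> J \<Longrightarrow> dplap p J c K us i = f i"
    and scheme: "time_partition t N" "explicit_scheme p J c K f g t N u" "step_ok p J c K f t N u"
    and k: "k \<in> {1..N}" and s: "s \<in> {t (k - 1)..t k}"
    and M: "Linf1norm (inj2 J c K) \<le> M" and B: "L2norm (\<lambda>x. inj J c g x - inj J c us x) \<le> B"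
  shows "L2norm (\<lambda>x. utilde J c t u k s x - ubar J c u k x) \<le> 2 * M * sqrt (1 + 4 * B\<^sup>2) * tau t N"
proof -
  interpret weighted_kernel J "cellmeas c" K "Linf1norm (inj2 J c K)"
    using K_nonneg K_sym by (rule weighted_kernel_cellmeas)
  define R where "R = wsqnorm J (cellmeas c) (\<lambda>i. dplap p J c K (u (k - 1)) i - f i)"
  have "(L2norm (\<lambda>x. inj J c g x - inj J c us x))\<^sup>2 = wsqnorm J (cellmeas c) (\<lambda>i. g i - us i)"
    using wsqnorm_nonneg by (simp add: L2norm_cellwise_const inj_eq_on_cell)
  then have E0: "wsqnorm J (cellmeas c) (\<lambda>i. g i - us i) \<le> B\<^sup>2"
    using power_mono[OF B L2norm_nonneg, of 2] by simp
  have "R = wsqnorm J (cellmeas c)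
      (\<lambda>i. wlap p J (cellmeas c) K (u (k - 1)) i - wlap p J (cellmeas c) K us i)"
    unfolding R_def wsqnorm_def using ustar by (simp add: dplap_eq_wlap cong: sum.cong)
  also have "\<dots> \<le> 4 * (Linf1norm (inj2 J c K))\<^sup>2 * (1 + 4 * wsqnorm J (cellmeas c) (\<lambda>i. u (k - 1) i - us i))"
    by (rule wsqnorm_wlap_diff_le[OF p])
  also have "\<dots> \<le> 4 * M\<^sup>2 * (1 + 4 * B\<^sup>2)"
  proof (intro mult_mono add_left_mono mult_left_mono)
    show "(Linf1norm (inj2 J c K))\<^sup>2 \<le> M\<^sup>2"
      using M bound_nonneg by (intro power_mono)
    show "wsqnorm J (cellmeas c) (\<lambda>i. u (k - 1) i - us i) \<le> B\<^sup>2"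
    proof -
      have "k - 1 \<le> N"
        using k by auto
      then show ?thesis
        using order_trans[OF explicit_scheme_error_le[OF p K_nonneg K_sym ustar scheme] E0] by blast
    qed
  qed (use wsqnorm_nonneg in auto)
  finally have "sqrt R \<le> sqrt (4 * M\<^sup>2 * (1 + 4 * B\<^sup>2))"
    by (rule real_sqrt_le_mono)
  also have "\<dots> = 2 * M * sqrt (1 + 4 * B\<^sup>2)"
    using M bound_nonneg by (simp add: real_sqrt_mult)
  finally have "sqrt R \<le> 2 * M * sqrt (1 + 4 * B\<^sup>2)" .
  moreover have "L2norm (\<lambda>x. utilde J c t u k s x - ubar J c u k x) = (s - t (k - 1)) * sqrt R"
    using L2norm_utilde_minus_ubar[OF scheme(1,2) k] s by (simp add: R_def)
  moreover have "s - t (k - 1) \<le> tau t N"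
    using s step_le_tau[OF k, of t] by simp
  ultimately show ?thesis
    using s wsqnorm_nonneg by (simp add: R_def mult_mono mult.commute)
qed

end

theorem lemma6p6:
  fixes p :: real
    and J :: "nat \<Rightarrow> 'i set"
    and cell :: "nat \<Rightarrow> 'i \<Rightarrow> (real^'d::finite) set"
    and K :: "nat \<Rightarrow> 'i \<Rightarrow> 'i \<Rightarrow> real"
    and f g ustar :: "nat \<Rightarrow> 'i \<Rightarrow> real"
  assumes p_gt: "1 < p" and p_le: "p \<le> 2"
    and partition: "\<And>n. is_cell_partition (J n) (cell n)"
    and K_nonneg: "\<And>n i j. i \<in> J n \<Longrightarrow> j \<in> J n \<Longrightarrow> 0 \<le> K n i j"
    and K_sym: "\<And>n i j. i \<in> J n \<Longrightarrow> j \<in> J n \<Longrightarrow> K n i j = K n j i"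
    and ustar: "\<And>n i. i \<in> J n \<Longrightarrow> dplap p (J n) (cell n) (K n) (ustar n) i = f n i"
    and g_bdd: "bdd_above (range (\<lambda>n. L2norm (\<lambda>x. inj (J n) (cell n) (g n) x - inj (J n) (cell n) (ustar n) x)))"
    and K_bdd: "bdd_above (range (\<lambda>n. Linf1norm (inj2 (J n) (cell n) (K n))))"
  shows "\<exists>C>0. \<forall>n N t u.
           time_partition t N \<and> explicit_scheme p (J n) (cell n) (K n) (f n) (g n) t N u
           \<and> step_ok p (J n) (cell n) (K n) (f n) t N u \<longrightarrow>
           (\<forall>k\<in>{1..N}. \<forall>s\<in>{t (k - 1)..t k}.
              L2norm (\<lambda>x. utilde (J n) (cell n) t u k s x - ubar (J n) (cell n) u k x) \<le> C * tau t N)"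
proof -
  obtain M where M: "\<And>n. Linf1norm (inj2 (J n) (cell n) (K n)) \<le> M"
    using K_bdd by (auto simp: bdd_above_def)
  obtain B where B: "\<And>n. L2norm (\<lambda>x. inj (J n) (cell n) (g n) x - inj (J n) (cell n) (ustar n) x) \<le> B"
    using g_bdd by (auto simp: bdd_above_def)
  define C where "C = 2 * max M 1 * sqrt (1 + 4 * (max B 0)\<^sup>2)"
  show ?thesis
  proof (intro exI[of _ C] conjI allI impI ballI)
    show "0 < C"
      by (simp add: C_def add_pos_nonneg)
    fix n N t u k s
    assume scheme: "time_partition t N \<and> explicit_scheme p (J n) (cell n) (K n) (f n) (g n) t N u
      \<and> step_ok p (J n) (cell n) (K n) (f n) t N u"
      and k: "k \<in> {1..N}" and s: "s \<in> {t (k - 1)..t k}"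
    interpret cell_partition "J n" "cell n"
      using partition by unfold_locales
    show "L2norm (\<lambda>x. utilde (J n) (cell n) t u k s x - ubar (J n) (cell n) u k x) \<le> C * tau t N"
      unfolding C_def using scheme
      by (intro interpolation_error_le[OF p_gt p_le K_nonneg K_sym ustar _ _ _ k s
            order_trans[OF M max.cobounded1] order_trans[OF B max.cobounded1]]) simp_all
  qed
qed
end
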